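(* Let $K$ be a field of characteristic zero, $m\in K[x,y]$ irreducible over $K(x)$ with $n=\deg_y(m)$, and $A=K(x)[y]/\langle m\rangle$ equipped with the derivation $'$ extending $d/dx$. Let $W=(\omega_1,\dots,\omega_n)$ be a $K(x)$-vector space basis of $A$, and let $e\in K[x]$ and $M=(m_{i,j})\in K[x]^{n\times n}$ be such that $eW'=MW$ and $\gcd(e,m_{1,1},m_{1,2},\dots,m_{n,n})=1$. Let $a\in\bar K$. If there exists $\omega\in W$ such that $a$ is a branch point of $\omega$, then $a$ is a root of $e$.
   Context: $\bar K$ is the algebraic closure of $K$. For $a\in\bar K$, $\bar K\langle\langle x-a\rangle\rangle=\bigcup_{r\ge1}\bar K((\,(x-a)^{1/r}))$ is the field of formal Puiseux series at $a$; $m$ has $n$ distinct roots $y_1,\dots,y_n$ there, giving $n$ $K(x)$-embeddings $\sigma_i:A\to\bar K\langle\langle x-a\rangle\rangle$, $\sigma_i(f(y))=f(y_i)$, which commute with differentiation. The ramification index of a series $P$ is the least $r\ge1$ with $P\in\bar K((\,(x-a)^{1/r}))$; $P$ is ramified if this index exceeds $1$. A point $a\in\bar K$ is a branch point of $f\in A$ if some $\sigma_i(f)$ (series at $a$) is ramified. *)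

theory Defs
  imports "HOL-Computational_Algebra.Computational_Algebra"
          "HOL-Algebra.Algebraic_Closure_Type"
begin

text \<open>K(x) is the fraction field 'k poly fract.
  A bivariate polynomial m in K[x,y] is a 'k poly poly (outer variable y, coefficients in K[x]).
  Elements of A = K(x)[y]/<m> are represented by polynomials in K(x)[y], i.e. of type
  'k poly fract poly; two representatives denote the same element of A iff m divides their
  difference.  The algebraic closure of K is the type 'k alg_closure with embedding to_ac.\<close>

definition mK :: "'k::field poly poly \<Rightarrow> 'k poly fract poly" where
  "mK m = map_poly to_fract m"

text \<open>Some representation g = p/q with q nonzero (results below do not depend on the choice).\<close>
definition rep :: "'k::field poly fract \<Rightarrow> 'k poly \<times> 'k poly" where
  "rep g = (SOME pq. snd pq \<noteq> 0 \<and> g = Fract (fst pq) (snd pq))"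

definition fderiv :: "'k::field poly fract \<Rightarrow> 'k poly fract" where
  "fderiv g = (case rep g of (p, q) \<Rightarrow>
      Fract (pderiv p * q - p * pderiv q) (q ^ 2))"

text \<open>Derivative of y in A: the class of a polynomial yd with m_y * yd + m_x = 0 in A.\<close>
definition ydash :: "'k::field poly poly \<Rightarrow> 'k poly fract poly" where
  "ydash m = (SOME yd. mK m dvd (pderiv (mK m) * yd + map_poly fderiv (mK m)))"

definition Aderiv :: "'k::field poly poly \<Rightarrow> 'k poly fract poly \<Rightarrow> 'k poly fract poly" where
  "Aderiv m f = (map_poly fderiv f + pderiv f * ydash m) mod mK m"

definition is_A_basis :: "'k::field poly poly \<Rightarrow> nat \<Rightarrow> (nat \<Rightarrow> 'k poly fract poly) \<Rightarrow> bool" where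
  "is_A_basis m n W \<longleftrightarrow>
     (\<forall>c. mK m dvd (\<Sum>i<n. smult (c i) (W i)) \<longrightarrow> (\<forall>i<n. c i = 0)) \<and>
     (\<forall>f. \<exists>c. mK m dvd (f - (\<Sum>i<n. smult (c i) (W i))))"

text \<open>Puiseux series at a are represented concretely: a series in
  Kbar((( x - a)^(1/r))) is a Laurent series in t = (x - a)^(1/r), i.e. an element of
  'k alg_closure fls in which x is substituted by a + t^r.\<close>
definition ser_at :: "'k::field alg_closure \<Rightarrow> nat \<Rightarrow> 'k poly fract \<Rightarrow> 'k alg_closure fls" where
  "ser_at a r g = (case rep g of (p, q) \<Rightarrow>
      poly (map_poly (fls_const \<circ> to_ac) p) (fls_const a + fls_X ^ r) /
      poly (map_poly (fls_const \<circ> to_ac) q) (fls_const a + fls_X ^ r))"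

text \<open>a is a branch point of f in A: for some root y_i of m in the Puiseux series field at a
  (realised, for some r >= 1, as a root Y in Kbar((t)), t^r = x - a), the series
  sigma_i(f) = f(y_i) is ramified, i.e. does not lie in Kbar((x - a)):
  it has a nonzero coefficient at a power t^k with r not dividing k.\<close>
definition branch_point :: "'k::field poly poly \<Rightarrow> 'k poly fract poly \<Rightarrow> 'k alg_closure \<Rightarrow> bool" where
  "branch_point m f a \<longleftrightarrow>
     (\<exists>r::nat. r \<ge> 1 \<and> (\<exists>Y. poly (map_poly (ser_at a r) (mK m)) Y = 0 \<and>
        (\<exists>k::int. fls_nth (poly (map_poly (ser_at a r) f) Y) k \<noteq> 0 \<and> \<not> (int r dvd k))))"

end

theory Submission
  imports Defs
begin

text \<open>Suppose \<open>e(a) \<noteq> 0\<close> and let Y be a root of m in \<open>Kbar((t))\<close>, where \<open>t\<^sup>r = x - a\<close>.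
  The embedding \<open>\<sigma>: f \<mapsto> f(Y)\<close> of A satisfies \<open>d/dt \<sigma>(f) = \<sigma>(f') \<cdot> d/dt x\<close>, so the Euler
  operator \<open>\<theta> = t d/dt\<close> turns \<open>eW' = MW\<close> into the system
  \<open>e(a + t\<^sup>r) \<theta>(w\<^sub>i) = \<theta>(x) \<Sum>\<^sub>j M\<^sub>i\<^sub>j(a + t\<^sup>r) w\<^sub>j\<close> for \<open>w\<^sub>i = \<sigma>(\<omega>\<^sub>i)\<close>.
  All its coefficients are power series in \<open>t\<^sup>r\<close>; \<open>e(a + t\<^sup>r)\<close> has constant term \<open>e(a) \<noteq> 0\<close>,
  whereas \<open>\<theta>(x) = r t\<^sup>r\<close> has none. Hence the parts of the \<open>w\<^sub>i\<close> supported on exponents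
  not divisible by r solve the same system, and comparing coefficients at their least exponent v,
  where \<open>\<theta>\<close> multiplies by \<open>v \<noteq> 0\<close>, shows that these parts vanish: no \<open>\<sigma>(\<omega>\<^sub>i)\<close> is ramified.\<close>

unbundle fps_syntax

section \<open>Laurent series in powers of \<open>X\<^sup>r\<close>\<close>

text \<open>With \<open>X\<^sup>r = x - a\<close>, these are the unramified power series in \<open>x - a\<close>.\<close>

definition fls_series_in_Xpow :: "nat \<Rightarrow> 'a::zero fls \<Rightarrow> bool" where
  "fls_series_in_Xpow r s \<longleftrightarrow> (\<forall>k. s $$ k \<noteq> 0 \<longrightarrow> 0 \<le> k \<and> int r dvd k)"

definition fls_ramified_part :: "nat \<Rightarrow> 'a::zero fls \<Rightarrow> 'a fls" where
  "fls_ramified_part r h = Abs_fls (\<lambda>k. if int r dvd k then 0 else h $$ k)"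

definition fls_theta :: "'a::comm_ring_1 fls \<Rightarrow> 'a fls" where
  "fls_theta h = fls_X * fls_deriv h"

lemma fls_ramified_part_nth [simp]:
  "fls_ramified_part r h $$ k = (if int r dvd k then 0 else h $$ k)"
  unfolding fls_ramified_part_def by (rule nth_Abs_fls_lower_bound[of "fls_subdegree h"]) simp

lemma fls_theta_nth [simp]: "fls_theta h $$ k = of_int k * h $$ k"
  by (simp add: fls_theta_def fls_X_times_conv_shift)

lemma fls_mult_nth_eq_0:
  fixes s g :: "'a::comm_ring_1 fls"
  assumes "\<And>i. s $$ i \<noteq> 0 \<Longrightarrow> g $$ (k - i) = 0"
  shows "(s * g) $$ k = 0"
proof -
  have "s $$ i * g $$ (k - i) = 0" for i
    using assms by (cases "s $$ i = 0") auto
  then show ?thesis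
    by (simp add: fls_times_nth(2))
qed

lemma fls_mult_nth_lowest:
  fixes s h :: "'a::comm_ring_1 fls"
  assumes s: "\<And>k. k < 0 \<Longrightarrow> s $$ k = 0" and h: "\<And>k. k < v \<Longrightarrow> h $$ k = 0"
  shows "(s * h) $$ v = s $$ 0 * h $$ v"
proof -
  define s1 where "s1 = s - fls_const (s $$ 0)"
  have "(s1 * h) $$ v = 0"
  proof (rule fls_mult_nth_eq_0)
    fix i assume "s1 $$ i \<noteq> 0"
    then have "i \<noteq> 0" "s $$ i \<noteq> 0"
      by (simp_all add: s1_def split: if_splits)
    then have "0 < i"
      using s by (meson linorder_neqE_linordered_idom)
    then show "h $$ (v - i) = 0"
      using h by simp
  qed
  moreover have "s = fls_const (s $$ 0) + s1"
    by (simp add: s1_def)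
  ultimately show ?thesis
    by (metis add.right_neutral distrib_right fls_mult_const_nth fls_plus_nth)
qed

lemma fls_mult_nth_below:
  fixes s h :: "'a::comm_ring_1 fls"
  assumes s: "\<And>k. k < 0 \<Longrightarrow> s $$ k = 0" and h: "\<And>k. k < v \<Longrightarrow> h $$ k = 0" and "k < v"
  shows "(s * h) $$ k = 0"
proof (rule fls_mult_nth_eq_0)
  fix i assume "s $$ i \<noteq> 0"
  then show "h $$ (k - i) = 0"
    using s h \<open>k < v\<close> by (cases "i < 0") auto
qed

lemma fls_series_in_Xpow_nonneg: "fls_series_in_Xpow r s \<Longrightarrow> k < 0 \<Longrightarrow> s $$ k = 0"
  unfolding fls_series_in_Xpow_def by force

lemma fls_series_in_Xpow_const: "fls_series_in_Xpow r (fls_const c)"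
  unfolding fls_series_in_Xpow_def by simp

lemma fls_series_in_Xpow_X_power: "fls_series_in_Xpow r (fls_X ^ r)"
  unfolding fls_series_in_Xpow_def by simp

lemma fls_series_in_Xpow_add:
  "fls_series_in_Xpow r s \<Longrightarrow> fls_series_in_Xpow r g \<Longrightarrow> fls_series_in_Xpow r (s + g)"
  unfolding fls_series_in_Xpow_def by (metis add.right_neutral add_0 fls_plus_nth)

lemma fls_series_in_Xpow_mult:
  fixes s g :: "'a::comm_ring_1 fls"
  assumes s: "fls_series_in_Xpow r s" and g: "fls_series_in_Xpow r g"
  shows "fls_series_in_Xpow r (s * g)"
  unfolding fls_series_in_Xpow_def
proof (intro allI impI)
  fix k assume "(s * g) $$ k \<noteq> 0"
  then obtain i where "s $$ i \<noteq> 0" "g $$ (k - i) \<noteq> 0"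
    using fls_mult_nth_eq_0 by blast
  then show "0 \<le> k \<and> int r dvd k"
    using s g unfolding fls_series_in_Xpow_def by (metis add_nonneg_nonneg diff_add_cancel dvd_add)
qed

lemma fls_series_in_Xpow_theta: "fls_series_in_Xpow r s \<Longrightarrow> fls_series_in_Xpow r (fls_theta s)"
  unfolding fls_series_in_Xpow_def fls_theta_nth by (metis mult_zero_right)

lemma fls_ramified_part_add:
  "fls_ramified_part r (f + g) = fls_ramified_part r f + fls_ramified_part r (g :: 'a::monoid_add fls)"
  by (simp add: fls_eq_iff)

lemma fls_ramified_part_sum:
  "fls_ramified_part r (\<Sum>j\<in>A. F j) = (\<Sum>j\<in>A. fls_ramified_part r (F j :: 'a::comm_monoid_add fls))"
  by (induction A rule: infinite_finite_induct) (simp_all add: fls_ramified_part_add fls_eq_iff)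

lemma fls_ramified_part_theta: "fls_ramified_part r (fls_theta h) = fls_theta (fls_ramified_part r h)"
  by (simp add: fls_eq_iff)

lemma fls_ramified_part_mult:
  fixes s h :: "'a::comm_ring_1 fls"
  assumes s: "fls_series_in_Xpow r s"
  shows "fls_ramified_part r (s * h) = s * fls_ramified_part r h"
proof -
  let ?u = "fls_ramified_part r h"
  have dvd_iff: "int r dvd k - i \<longleftrightarrow> int r dvd k" if "s $$ i \<noteq> 0" for k i
    using s that unfolding fls_series_in_Xpow_def by (metis dvd_diff diff_add_cancel dvd_add)
  have "s * h = s * ?u + s * (h - ?u)"
    by (simp add: algebra_simps)
  moreover have "(s * ?u) $$ k = 0" if "int r dvd k" for k
    using that dvd_iff by (intro fls_mult_nth_eq_0) simp
  moreover have "(s * (h - ?u)) $$ k = 0" if "\<not> int r dvd k" for k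
    using that dvd_iff by (intro fls_mult_nth_eq_0) simp
  ultimately show ?thesis
    by (simp add: fls_eq_iff)
qed

lemma fls_euler_system_ramified_eq_0:
  fixes u :: "nat \<Rightarrow> 'a::field_char_0 fls" and c :: "nat \<Rightarrow> nat \<Rightarrow> 'a fls"
  assumes s: "fls_series_in_Xpow r s" "s $$ 0 \<noteq> 0"
    and q: "fls_series_in_Xpow r q" "q $$ 0 = 0"
    and c: "\<And>i j. fls_series_in_Xpow r (c i j)"
    and sys: "\<And>i. i < n \<Longrightarrow> s * fls_theta (u i) = q * (\<Sum>j<n. c i j * u j)"
    and ramified: "\<And>i k. int r dvd k \<Longrightarrow> u i $$ k = 0"
    and "i < n"
  shows "u i = 0"
proof (rule ccontr)
  assume "u i \<noteq> 0"
  define I where "I = {j. j < n \<and> u j \<noteq> 0}"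
  define v where "v = Min ((\<lambda>j. fls_subdegree (u j)) ` I)"
  have "finite I" "i \<in> I"
    using \<open>i < n\<close> \<open>u i \<noteq> 0\<close> by (simp_all add: I_def)
  then have "v \<in> (\<lambda>j. fls_subdegree (u j)) ` I"
    unfolding v_def by (intro Min_in) auto
  then obtain j0 where j0: "j0 < n" "u j0 \<noteq> 0" "fls_subdegree (u j0) = v"
    by (auto simp: I_def)
  have below: "u j $$ k = 0" if "j < n" "k < v" for j k
  proof (cases "u j = 0")
    case False
    with that \<open>finite I\<close> have "v \<le> fls_subdegree (u j)"
      unfolding v_def I_def by simp
    with \<open>k < v\<close> show ?thesis
      by simp
  qed simp
  have lowest: "u j0 $$ v \<noteq> 0"
    using j0 nth_fls_subdegree_nonzero[of "u j0"] by simp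
  then have "v \<noteq> 0"
    using ramified by fastforce
  have "(s * fls_theta (u j0)) $$ v = s $$ 0 * (of_int v * u j0 $$ v)"
    using j0 below by (subst fls_mult_nth_lowest[OF fls_series_in_Xpow_nonneg[OF s(1)]]) auto
  also have "\<dots> \<noteq> 0"
    using s(2) \<open>v \<noteq> 0\<close> lowest by simp
  finally have "(s * fls_theta (u j0)) $$ v \<noteq> 0" .
  moreover have "(\<Sum>j<n. c j0 j * u j) $$ k = 0" if "k < v" for k
  proof -
    have "(c j0 j * u j) $$ k = 0" if "j < n" for j
      using fls_mult_nth_below[of "c j0 j" v "u j"] fls_series_in_Xpow_nonneg[OF c] below[OF that]
        \<open>k < v\<close> by blast
    then show ?thesis
      by (simp add: fls_nth_sum)
  qed
  then have "(q * (\<Sum>j<n. c j0 j * u j)) $$ v = 0"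
    using fls_mult_nth_lowest[OF fls_series_in_Xpow_nonneg[OF q(1)]] q(2) by simp
  ultimately show False
    using sys j0 by simp
qed

lemma fls_euler_system_unramified:
  fixes w :: "nat \<Rightarrow> 'a::field_char_0 fls" and c :: "nat \<Rightarrow> nat \<Rightarrow> 'a fls"
  assumes s: "fls_series_in_Xpow r s" "s $$ 0 \<noteq> 0"
    and q: "fls_series_in_Xpow r q" "q $$ 0 = 0"
    and c: "\<And>i j. fls_series_in_Xpow r (c i j)"
    and sys: "\<And>i. i < n \<Longrightarrow> s * fls_theta (w i) = q * (\<Sum>j<n. c i j * w j)"
    and "i < n" "\<not> int r dvd k"
  shows "w i $$ k = 0"
proof -
  define u where "u j = fls_ramified_part r (w j)" for j
  have "s * fls_theta (u j) = q * (\<Sum>l<n. c j l * u l)" if "j < n" for j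
  proof -
    have "s * fls_theta (u j) = fls_ramified_part r (s * fls_theta (w j))"
      by (simp add: u_def fls_ramified_part_mult[OF s(1)] fls_ramified_part_theta)
    also have "\<dots> = fls_ramified_part r (q * (\<Sum>l<n. c j l * w l))"
      by (simp only: sys[OF that])
    also have "\<dots> = q * (\<Sum>l<n. c j l * u l)"
      by (simp add: u_def fls_ramified_part_mult[OF q(1)] fls_ramified_part_mult[OF c]
          fls_ramified_part_sum)
    finally show ?thesis .
  qed
  then have "u i = 0"
    using \<open>i < n\<close> by (intro fls_euler_system_ramified_eq_0[where c = c and u = u, OF s q c])
      (simp_all add: u_def)
  then show ?thesis
    using fls_ramified_part_nth[of r "w i" k] \<open>\<not> int r dvd k\<close> by (simp add: u_def)
qed

section \<open>Substituting \<open>x = a + X\<^sup>r\<close>\<close>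

locale comm_ring_hom =
  fixes h :: "'a::idom \<Rightarrow> 'b::idom"
  assumes hom_add: "h (x + y) = h x + h y"
    and hom_mult: "h (x * y) = h x * h y"
    and hom_1: "h 1 = 1"
begin

lemma hom_0: "h 0 = 0"
  using hom_add[of 0 0] by (metis add_0 add_cancel_left_right)

lemma hom_diff: "h (x - y) = h x - h y"
  using hom_add[of "x - y" y] by (simp add: eq_diff_eq)

lemma hom_sum: "h (\<Sum>j\<in>A. F j) = (\<Sum>j\<in>A. h (F j))"
  by (induction A rule: infinite_finite_induct) (simp_all add: hom_0 hom_add)

lemma hom_power: "h (x ^ k) = h x ^ k"
  by (induction k) (simp_all add: hom_1 hom_mult)

lemma hom_of_nat: "h (of_nat k) = of_nat k"
  by (induction k) (simp_all add: hom_0 hom_1 hom_add)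

lemma map_poly_add: "map_poly h (p + q) = map_poly h p + map_poly h q"
  by (intro poly_eqI) (simp add: coeff_map_poly hom_0 hom_add)

lemma map_poly_smult: "map_poly h (smult c p) = smult (h c) (map_poly h p)"
  by (rule map_poly_smult) (simp_all add: hom_0 hom_mult)

lemma map_poly_mult: "map_poly h (p * q) = map_poly h p * map_poly h q"
  by (induction p) (simp_all add: map_poly_pCons hom_0 map_poly_add map_poly_smult)

lemma map_poly_pderiv: "map_poly h (pderiv p) = pderiv (map_poly h p)"
  by (intro poly_eqI) (simp add: coeff_map_poly coeff_pderiv hom_0 hom_mult hom_of_nat del: of_nat_Suc)

lemma comm_ring_hom_poly_map_poly: "comm_ring_hom (\<lambda>p. poly (map_poly h p) z)"
  by unfold_locales (simp_all add: map_poly_add map_poly_mult hom_1)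

end

lemma fls_deriv_poly:
  fixes z :: "'a::field fls"
  shows "fls_deriv (poly p z) = poly (map_poly fls_deriv p) z + poly (pderiv p) z * fls_deriv z"
  by (induction p) (simp_all add: map_poly_pCons pderiv_pCons algebra_simps)

definition fls_x_at :: "'a::field \<Rightarrow> nat \<Rightarrow> 'a fls" where
  "fls_x_at a r = fls_const a + fls_X ^ r"

definition poly_expand :: "'a::field \<Rightarrow> nat \<Rightarrow> 'a poly \<Rightarrow> 'a fls" where
  "poly_expand a r p = poly (map_poly fls_const p) (fls_x_at a r)"

interpretation fls_const_hom: comm_ring_hom fls_const
  by unfold_locales (simp_all add: fls_plus_const)

interpretation to_ac_hom: comm_ring_hom to_ac
  by unfold_locales simp_all

interpretation poly_expand_hom: comm_ring_hom "poly_expand a r" for a r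
  unfolding poly_expand_def by (rule fls_const_hom.comm_ring_hom_poly_map_poly)

lemma poly_expand_pCons:
  "poly_expand a r (pCons c p) = fls_const c + fls_x_at a r * poly_expand a r p"
  by (simp add: poly_expand_def map_poly_pCons)

lemma poly_expand_deriv:
  "fls_deriv (poly_expand a r p) = poly_expand a r (pderiv p) * fls_deriv (fls_x_at a r)"
proof -
  have "map_poly fls_deriv (map_poly fls_const p) = 0"
    by (intro poly_eqI) (simp add: coeff_map_poly)
  then show ?thesis
    by (simp add: poly_expand_def fls_deriv_poly fls_const_hom.map_poly_pderiv)
qed

lemma fls_series_in_Xpow_x_at: "fls_series_in_Xpow r (fls_x_at a r)"
  unfolding fls_x_at_def
  by (intro fls_series_in_Xpow_add fls_series_in_Xpow_const fls_series_in_Xpow_X_power)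

lemma fls_series_in_Xpow_poly_expand: "fls_series_in_Xpow r (poly_expand a r p)"
proof (induction p)
  case 0
  then show ?case
    by (simp add: poly_expand_hom.hom_0 fls_series_in_Xpow_def)
next
  case (pCons c p)
  then show ?case
    by (simp add: poly_expand_pCons fls_series_in_Xpow_add fls_series_in_Xpow_const
        fls_series_in_Xpow_mult fls_series_in_Xpow_x_at)
qed

lemma poly_expand_nth_0:
  assumes "0 < r"
  shows "poly_expand a r p $$ 0 = poly p a"
proof (induction p)
  case (pCons c p)
  have "(fls_x_at a r * poly_expand a r p) $$ 0 = a * poly p a"
    using pCons.IH \<open>0 < r\<close> fls_series_in_Xpow_nonneg[OF fls_series_in_Xpow_poly_expand]
    by (subst fls_mult_nth_lowest) (simp_all add: fls_x_at_def)
  then show ?case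
    by (simp add: poly_expand_pCons)
qed (simp add: poly_expand_def)

lemma poly_expand_nonzero:
  assumes "0 < r" "p \<noteq> 0"
  shows "poly_expand a r p \<noteq> 0"
proof -
  obtain p1 where p1: "p = [:- a, 1:] ^ order a p * p1" "\<not> [:- a, 1:] dvd p1"
    using order_decomp[OF \<open>p \<noteq> 0\<close>] by blast
  have "poly p1 a \<noteq> 0"
    using p1(2) poly_eq_0_iff_dvd by blast
  then have "poly_expand a r p1 $$ 0 \<noteq> 0"
    by (simp add: poly_expand_nth_0[OF \<open>0 < r\<close>])
  moreover have "poly_expand a r [:- a, 1:] = fls_X ^ r"
    by (simp add: poly_expand_def fls_x_at_def map_poly_pCons fls_plus_const)
  ultimately show ?thesis
    by (subst p1(1)) (auto simp: poly_expand_hom.hom_mult poly_expand_hom.hom_power)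
qed

definition ser_at_poly :: "'k::field alg_closure \<Rightarrow> nat \<Rightarrow> 'k poly \<Rightarrow> 'k alg_closure fls" where
  "ser_at_poly a r p = poly_expand a r (map_poly to_ac p)"

interpretation ser_at_poly_hom: comm_ring_hom "ser_at_poly a r" for a r
  by unfold_locales (simp_all add: ser_at_poly_def to_ac_hom.map_poly_add to_ac_hom.map_poly_mult
      poly_expand_hom.hom_add poly_expand_hom.hom_mult poly_expand_hom.hom_1)

lemma fls_series_in_Xpow_ser_at_poly: "fls_series_in_Xpow r (ser_at_poly a r p)"
  by (simp add: ser_at_poly_def fls_series_in_Xpow_poly_expand)

lemma ser_at_poly_nth_0: "0 < r \<Longrightarrow> ser_at_poly a r p $$ 0 = poly (map_poly to_ac p) a"
  by (simp add: ser_at_poly_def poly_expand_nth_0)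

lemma ser_at_poly_nonzero: "0 < r \<Longrightarrow> p \<noteq> 0 \<Longrightarrow> ser_at_poly a r p \<noteq> 0"
  by (simp add: ser_at_poly_def poly_expand_nonzero map_poly_eq_0_iff)

lemma ser_at_poly_deriv:
  "fls_deriv (ser_at_poly a r p) = ser_at_poly a r (pderiv p) * fls_deriv (fls_x_at a r)"
  by (simp add: ser_at_poly_def poly_expand_deriv to_ac_hom.map_poly_pderiv)

section \<open>Bezout identities over a field\<close>

lemma poly_bezout_common_divisor:
  fixes a b :: "'a::field poly"
  shows "\<exists>u v d. u * a + v * b = d \<and> d dvd a \<and> d dvd b"
proof (induction b arbitrary: a rule: measure_induct_rule[where f = euclidean_size])
  case (less b)
  show ?case
  proof (cases "b = 0")
    case True
    then show ?thesis
      by (intro exI[of _ 1] exI[of _ 0] exI[of _ a]) simp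
  next
    case False
    then obtain u v d where uvd: "u * b + v * (a mod b) = d" "d dvd b" "d dvd a mod b"
      using less.IH[of "a mod b" b] mod_size_less by blast
    have "v * a + (u - v * (a div b)) * b = u * b + v * (a - a div b * b)"
      by (simp add: algebra_simps)
    also have "\<dots> = d"
      using uvd(1) by (simp add: minus_div_mult_eq_mod)
    finally have "v * a + (u - v * (a div b)) * b = d" .
    moreover have "d dvd a div b * b + a mod b"
      using uvd(2,3) by (intro dvd_add dvd_mult)
    ultimately show ?thesis
      using uvd(2) by auto
  qed
qed

lemma irreducible_bezout:
  fixes p q :: "'a::field poly"
  assumes irr: "irreducible p" and "\<not> p dvd q"
  shows "\<exists>u v. u * p + v * q = 1"
proof -
  obtain u v d where uvd: "u * p + v * q = d" "d dvd p" "d dvd q"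
    using poly_bezout_common_divisor by blast
  then have "is_unit d"
    using irr \<open>\<not> p dvd q\<close> unfolding irreducible_altdef by (meson dvd_trans)
  then obtain d' where "1 = d * d'"
    by (rule dvdE)
  have "(d' * u) * p + (d' * v) * q = d' * (u * p + v * q)"
    by (simp add: algebra_simps)
  also have "\<dots> = 1"
    using uvd(1) \<open>1 = d * d'\<close> by (simp add: mult.commute)
  finally show ?thesis
    by blast
qed

lemma irreducible_pderiv_bezout:
  fixes p :: "'a::field_char_0 poly"
  assumes "irreducible p"
  shows "\<exists>u v. u * p + v * pderiv p = 1"
proof -
  have "p \<noteq> 0" "\<not> is_unit p"
    using assms irreducible_not_unit by (auto simp: irreducible_def)
  then have "degree p \<noteq> 0"
    by (simp add: is_unit_iff_degree)
  then have "pderiv p \<noteq> 0" "degree (pderiv p) < degree p"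
    by (simp_all add: pderiv_eq_0_iff degree_pderiv)
  then have "\<not> p dvd pderiv p"
    by (metis dvd_imp_degree_le leD)
  then show ?thesis
    by (rule irreducible_bezout[OF assms])
qed

instance fract :: ("{idom, ring_char_0}") field_char_0
proof
  show "inj (of_nat :: nat \<Rightarrow> 'a fract)"
    by (intro injI) (simp add: of_nat_fract eq_fract)
qed

lemma ydash_spec:
  fixes m :: "'k::field_char_0 poly poly"
  assumes "irreducible (mK m)"
  shows "mK m dvd pderiv (mK m) * ydash m + map_poly fderiv (mK m)"
  unfolding ydash_def
proof (rule someI_ex)
  let ?mx = "map_poly fderiv (mK m)" and ?my = "pderiv (mK m)"
  obtain u v where uv: "u * mK m + v * ?my = 1"
    using irreducible_pderiv_bezout[OF assms] by blast
  have "?my * (- v * ?mx) + ?mx = (u * mK m + v * ?my) * ?mx - v * ?my * ?mx"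
    by (simp only: uv) (simp add: algebra_simps)
  also have "\<dots> = mK m * (u * ?mx)"
    by (simp add: algebra_simps)
  finally show "\<exists>yd. mK m dvd ?my * yd + ?mx"
    by (metis dvd_triv_left)
qed

section \<open>The embeddings of \<open>K(x)\<close> and of A into Laurent series\<close>

lemma rep_Fract: "snd (rep g) \<noteq> 0" "Fract (fst (rep g)) (snd (rep g)) = g"
proof -
  obtain p q where "g = Fract p q" "q \<noteq> 0"
    by (cases g) blast
  then have "\<exists>pq. snd pq \<noteq> 0 \<and> g = Fract (fst pq) (snd pq)"
    by (intro exI[of _ "(p, q)"]) simp
  then have "snd (rep g) \<noteq> 0 \<and> g = Fract (fst (rep g)) (snd (rep g))"
    unfolding rep_def by (rule someI_ex)
  then show "snd (rep g) \<noteq> 0" "Fract (fst (rep g)) (snd (rep g)) = g"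
    by simp_all
qed

lemma ser_at_rep: "ser_at a r g = ser_at_poly a r (fst (rep g)) / ser_at_poly a r (snd (rep g))"
  by (simp add: ser_at_def ser_at_poly_def poly_expand_def fls_x_at_def case_prod_unfold
      map_poly_map_poly)

lemma fderiv_0: "fderiv (0 :: 'a::field poly fract) = 0"
proof -
  obtain p q where pq: "rep (0 :: 'a poly fract) = (p, q)"
    by force
  then have "Fract p q = 0" "q \<noteq> 0"
    using rep_Fract[of "0 :: 'a poly fract"] by auto
  then have "p = 0"
    by (simp add: Zero_fract_def eq_fract)
  then show ?thesis
    unfolding fderiv_def pq by (simp add: fract_collapse)
qed

lemma fls_deriv_divide:
  fixes f g :: "'a::field fls"
  assumes "g \<noteq> 0"
  shows "fls_deriv (f / g) = (fls_deriv f * g - f * fls_deriv g) / g ^ 2"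
proof -
  have "fls_deriv f = fls_deriv (f / g * g)"
    using assms by simp
  also have "\<dots> = f / g * fls_deriv g + fls_deriv (f / g) * g"
    by (rule fls_deriv_mult)
  finally show ?thesis
    using assms by (simp add: field_simps power2_eq_square)
qed

definition sigma ::
    "'k::field alg_closure \<Rightarrow> nat \<Rightarrow> 'k alg_closure fls \<Rightarrow> 'k poly fract poly \<Rightarrow> 'k alg_closure fls"
  where "sigma a r Y f = poly (map_poly (ser_at a r) f) Y"

context
  fixes r :: nat
  assumes r_pos: "0 < r"
begin

lemma ser_at_Fract:
  assumes "q \<noteq> 0"
  shows "ser_at a r (Fract p q) = ser_at_poly a r p / ser_at_poly a r q"
proof -
  define p' q' where "p' = fst (rep (Fract p q))" and "q' = snd (rep (Fract p q))"
  have "q' \<noteq> 0" "Fract p' q' = Fract p q"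
    using rep_Fract unfolding p'_def q'_def by blast+
  then have "ser_at_poly a r p * ser_at_poly a r q' = ser_at_poly a r p' * ser_at_poly a r q"
    using \<open>q \<noteq> 0\<close> by (simp add: eq_fract flip: ser_at_poly_hom.hom_mult)
  then show ?thesis
    using ser_at_poly_nonzero[OF r_pos \<open>q \<noteq> 0\<close>] ser_at_poly_nonzero[OF r_pos \<open>q' \<noteq> 0\<close>]
    by (simp add: ser_at_rep frac_eq_eq mult.commute flip: p'_def q'_def)
qed

lemma ser_at_to_fract: "ser_at a r (to_fract p) = ser_at_poly a r p"
  by (simp add: to_fract_def ser_at_Fract ser_at_poly_hom.hom_1)

interpretation ser_at_hom: comm_ring_hom "ser_at a r" for a
proof
  fix x y :: "'a::field poly fract"
  obtain p q p' q' where "x = Fract p q" "q \<noteq> 0" "y = Fract p' q'" "q' \<noteq> 0"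
    by (cases x, cases y) blast
  then show "ser_at a r (x + y) = ser_at a r x + ser_at a r y"
    "ser_at a r (x * y) = ser_at a r x * ser_at a r y"
    using ser_at_poly_nonzero[OF r_pos, of q a] ser_at_poly_nonzero[OF r_pos, of q' a]
    by (simp_all add: ser_at_Fract ser_at_poly_hom.hom_add ser_at_poly_hom.hom_mult field_simps)
next
  show "ser_at a r 1 = 1"
    using ser_at_to_fract[of a 1] by (simp add: ser_at_poly_hom.hom_1)
qed

lemma ser_at_fderiv: "fls_deriv (ser_at a r g) = ser_at a r (fderiv g) * fls_deriv (fls_x_at a r)"
proof -
  obtain p q where pq: "rep g = (p, q)"
    by force
  have "q \<noteq> 0"
    using rep_Fract(1)[of g] by (simp add: pq)
  let ?S = "ser_at_poly a r"
  have "ser_at a r (fderiv g) = (?S (pderiv p) * ?S q - ?S p * ?S (pderiv q)) / ?S q ^ 2"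
    using \<open>q \<noteq> 0\<close> by (simp add: fderiv_def pq ser_at_Fract ser_at_poly_hom.hom_diff
        ser_at_poly_hom.hom_mult ser_at_poly_hom.hom_power)
  moreover have "ser_at a r g = ?S p / ?S q"
    by (simp add: ser_at_rep pq)
  ultimately show ?thesis
    using ser_at_poly_nonzero[OF r_pos \<open>q \<noteq> 0\<close>]
    by (simp add: fls_deriv_divide ser_at_poly_deriv algebra_simps)
qed

interpretation sigma_hom: comm_ring_hom "sigma a r Y" for a Y
  unfolding sigma_def by (rule ser_at_hom.comm_ring_hom_poly_map_poly)

lemma sigma_smult: "sigma a r Y (smult c f) = ser_at a r c * sigma a r Y f"
  by (simp add: sigma_def ser_at_hom.map_poly_smult)

lemma sigma_dvd_root: "sigma a r Y p = 0 \<Longrightarrow> p dvd f \<Longrightarrow> sigma a r Y f = 0"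
  by (auto simp: sigma_hom.hom_mult)

lemma sigma_mod_root:
  assumes "sigma a r Y p = 0"
  shows "sigma a r Y (f mod p) = sigma a r Y f"
  using sigma_hom.hom_add[of a Y "f div p * p" "f mod p"] assms
  by (simp add: sigma_hom.hom_mult)

lemma sigma_deriv:
  "fls_deriv (sigma a r Y f) =
     sigma a r Y (map_poly fderiv f) * fls_deriv (fls_x_at a r) + sigma a r Y (pderiv f) * fls_deriv Y"
proof -
  have "map_poly fls_deriv (map_poly (ser_at a r) f) =
      smult (fls_deriv (fls_x_at a r)) (map_poly (ser_at a r) (map_poly fderiv f))"
    by (intro poly_eqI) (simp add: coeff_map_poly fderiv_0 ser_at_hom.hom_0 ser_at_fderiv)
  then show ?thesis
    by (simp add: sigma_def fls_deriv_poly ser_at_hom.map_poly_pderiv mult.commute)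
qed

lemma sigma_Aderiv:
  fixes m :: "'k::field_char_0 poly poly"
  assumes irr: "irreducible (mK m)" and root: "sigma a r Y (mK m) = 0"
  shows "fls_deriv (sigma a r Y f) = sigma a r Y (Aderiv m f) * fls_deriv (fls_x_at a r)"
proof -
  let ?\<sigma> = "sigma a r Y" and ?D = "fls_deriv (fls_x_at a r)"
  let ?mx = "map_poly fderiv (mK m)" and ?my = "pderiv (mK m)"
  obtain u v where uv: "u * mK m + v * ?my = 1"
    using irreducible_pderiv_bezout[OF irr] by blast
  have "1 = ?\<sigma> (u * mK m + v * ?my)"
    by (simp add: uv sigma_hom.hom_1)
  also have "\<dots> = ?\<sigma> v * ?\<sigma> ?my"
    using root by (simp add: sigma_hom.hom_add sigma_hom.hom_mult)
  finally have my_nonzero: "?\<sigma> ?my \<noteq> 0"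
    by auto
  have ydash: "?\<sigma> ?my * ?\<sigma> (ydash m) + ?\<sigma> ?mx = 0"
    using sigma_dvd_root[OF root ydash_spec[OF irr]] by (simp add: sigma_hom.hom_add sigma_hom.hom_mult)
  have deriv_root: "?\<sigma> ?mx * ?D + ?\<sigma> ?my * fls_deriv Y = 0"
    using sigma_deriv[of a Y "mK m"] root by simp
  have "?\<sigma> ?my * (fls_deriv Y - ?\<sigma> (ydash m) * ?D) =
      (?\<sigma> ?mx * ?D + ?\<sigma> ?my * fls_deriv Y) - (?\<sigma> ?my * ?\<sigma> (ydash m) + ?\<sigma> ?mx) * ?D"
    by (simp add: algebra_simps)
  then have "fls_deriv Y = ?\<sigma> (ydash m) * ?D"
    using my_nonzero ydash deriv_root by simp
  then show ?thesis
    by (simp add: sigma_deriv Aderiv_def sigma_mod_root[OF root] sigma_hom.hom_add sigma_hom.hom_mult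
        algebra_simps)
qed

lemma sigma_euler_system:
  fixes m :: "'k::field_char_0 poly poly"
  assumes irr: "irreducible (mK m)" and root: "sigma a r Y (mK m) = 0"
    and eq: "mK m dvd smult (to_fract e) (Aderiv m f) - (\<Sum>j<n. smult (to_fract (M j)) (W j))"
  shows "ser_at_poly a r e * fls_theta (sigma a r Y f) =
    fls_theta (fls_x_at a r) * (\<Sum>j<n. ser_at_poly a r (M j) * sigma a r Y (W j))"
proof -
  have "ser_at_poly a r e * sigma a r Y (Aderiv m f) = (\<Sum>j<n. ser_at_poly a r (M j) * sigma a r Y (W j))"
    using sigma_dvd_root[OF root eq]
    by (simp add: sigma_hom.hom_diff sigma_hom.hom_sum sigma_smult ser_at_to_fract)
  moreover have "ser_at_poly a r e * fls_theta (sigma a r Y f) =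
      fls_theta (fls_x_at a r) * (ser_at_poly a r e * sigma a r Y (Aderiv m f))"
    by (simp add: fls_theta_def sigma_Aderiv[OF irr root] algebra_simps)
  ultimately show ?thesis
    by simp
qed

end

theorem lemma5:
  fixes m :: "'k::field_char_0 poly poly"
    and n :: nat
    and W :: "nat \<Rightarrow> 'k poly fract poly"
    and e :: "'k poly"
    and M :: "nat \<Rightarrow> nat \<Rightarrow> 'k poly"
    and a :: "'k alg_closure"
  assumes irr: "irreducible (mK m)"
    and n_def: "n = degree m"
    and basis: "is_A_basis m n W"
    and eWMW: "\<forall>i<n. mK m dvd
                 (smult (to_fract e) (Aderiv m (W i)) - (\<Sum>j<n. smult (to_fract (M i j)) (W j)))"
    and coprime: "\<forall>d::'k poly. d dvd e \<and> (\<forall>i<n. \<forall>j<n. d dvd M i j) \<longrightarrow> is_unit d"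
    and bp: "\<exists>i<n. branch_point m (W i) a"
  shows "poly (map_poly to_ac e) a = 0"
proof (rule ccontr)
  assume e_a: "poly (map_poly to_ac e) a \<noteq> 0"
  obtain i r Y k where "i < n" "1 \<le> r" "poly (map_poly (ser_at a r) (mK m)) Y = 0"
    and ramified: "poly (map_poly (ser_at a r) (W i)) Y $$ k \<noteq> 0" "\<not> int r dvd k"
    using bp unfolding branch_point_def by blast
  then have r: "0 < r" and root: "sigma a r Y (mK m) = 0"
    by (simp_all add: sigma_def)
  have "sigma a r Y (W i) $$ k = 0"
  proof (rule fls_euler_system_unramified[where w = "\<lambda>i. sigma a r Y (W i)"
        and c = "\<lambda>i j. ser_at_poly a r (M i j)"])
    show "fls_series_in_Xpow r (ser_at_poly a r e)" "ser_at_poly a r e $$ 0 \<noteq> 0"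
      using e_a by (simp_all add: fls_series_in_Xpow_ser_at_poly ser_at_poly_nth_0[OF r])
    show "fls_series_in_Xpow r (fls_theta (fls_x_at a r))" "fls_theta (fls_x_at a r) $$ 0 = 0"
      by (simp_all add: fls_series_in_Xpow_theta fls_series_in_Xpow_x_at)
    show "fls_series_in_Xpow r (ser_at_poly a r (M i j))" for i j
      by (rule fls_series_in_Xpow_ser_at_poly)
    show "ser_at_poly a r e * fls_theta (sigma a r Y (W i)) =
        fls_theta (fls_x_at a r) * (\<Sum>j<n. ser_at_poly a r (M i j) * sigma a r Y (W j))" if "i < n" for i
      using eWMW that by (simp add: sigma_euler_system[OF r irr root])
  qed (use \<open>i < n\<close> ramified in simp_all)
  with ramified show False
    by (simp add: sigma_def)
qed

end
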